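(* Let $N\in\mathbb{Z}^+$ and $\boldsymbol{\mu}\in\mathbb{R}_+^N$ with $0\le\mu[n]\le1$ for all $n$, and suppose $t=\sum_{n=1}^N\mu[n]\ge1$ is not an integer. Define $m_1[n]=\big[\mu[n]-(t-\lfloor t\rfloor)\big]^+$, $m_2[n]=\big[\mu[n]-(\lceil t\rceil-t)\big]^+$, $$r=\frac{\lfloor t\rfloor(\lceil t\rceil-t)-\sum_{n} m_1[n]}{t-\sum_{n} m_1[n]-\sum_{n} m_2[n]},$$ $\boldsymbol{\mu}^{(\lfloor t\rfloor)}=\boldsymbol{m}_1+(\boldsymbol{\mu}-\boldsymbol{m}_1-\boldsymbol{m}_2)r$ and $\boldsymbol{\mu}^{(\lceil t\rceil)}=\boldsymbol{m}_2+(\boldsymbol{\mu}-\boldsymbol{m}_1-\boldsymbol{m}_2)(1-r)$. Then $\boldsymbol{\mu}^{(\lfloor t\rfloor)}$ and $\boldsymbol{\mu}^{(\lceil t\rceil)}$ are nonnegative vectors with $\boldsymbol{\mu}^{(\lfloor t\rfloor)}+\boldsymbol{\mu}^{(\lceil t\rceil)}=\boldsymbol{\mu}$, $\sum_n\mu^{(\lfloor t\rfloor)}[n]=\lfloor t\rfloor(\lceil t\rceil-t)$, $\sum_n\mu^{(\lceil t\rceil)}[n]=\lceil t\rceil(t-\lfloor t\rfloor)$, and for all $n\in[N]$, $\mu^{(\lfloor t\rfloor)}[n]\le\lceil t\rceil-t$ and $\mu^{(\lceil t\rceil)}[n]\le t-\lfloor t\rfloor$.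
   Context: $[x]^+=\max(x,0)$; vector operations are entrywise. *)

theory Defs
  imports Complex_Main
begin

definition pos_part :: "real \<Rightarrow> real" where
  "pos_part x = max x 0"

end

theory Submission
  imports Defs
begin

text \<open>Write \<open>t = K + f\<close> with \<open>K = \<lfloor>t\<rfloor>\<close> and \<open>0 < f < 1\<close>. The part \<open>m1\<close> of \<open>mu\<close> goes to
  \<open>muF\<close>, the part \<open>m2\<close> goes to \<open>muC\<close>, and the nonnegative rest \<open>mu - m1 - m2\<close> is shared
  in the ratio \<open>r : 1 - r\<close>, with \<open>r\<close> chosen so that \<open>muF\<close> has the prescribed total
  \<open>K (1 - f)\<close>. This \<open>r\<close> lies in \<open>[0, 1]\<close> because \<open>\<Sum> m1 \<le> K (1 - f)\<close> and
  \<open>\<Sum> m2 \<le> (K + 1) f\<close>, two instances of a counting bound on \<open>\<Sum> [mu - a]\<^sup>+\<close>. The entrywise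
  caps hold because \<open>m1 + (mu - m1 - m2) = min mu (1 - f)\<close>, and symmetrically for \<open>m2\<close>.\<close>

lemma pos_part_nonneg: "0 \<le> pos_part x"
  by (simp add: pos_part_def)

lemma diff_pos_part_le: "x - pos_part (x - a) \<le> a"
  by (simp add: pos_part_def)

lemma pos_part_add_pos_part_complement_le:
  fixes x a :: real
  assumes "0 \<le> x" "x \<le> 1" "0 \<le> a" "a \<le> 1"
  shows "pos_part (x - a) + pos_part (x - (1 - a)) \<le> x"
  using assms by (simp add: pos_part_def max_def)

lemma split_pos_parts_bounds:
  fixes x a r :: real
  assumes "0 \<le> x" "x \<le> 1" "0 \<le> a" "a \<le> 1" "0 \<le> r" "r \<le> 1"
  defines "l \<equiv> pos_part (x - a)" and "u \<equiv> pos_part (x - (1 - a))"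
  shows "0 \<le> l + (x - l - u) * r" "l + (x - l - u) * r \<le> 1 - a"
    and "0 \<le> u + (x - l - u) * (1 - r)" "u + (x - l - u) * (1 - r) \<le> a"
proof -
  have "0 \<le> x - l - u"
    using pos_part_add_pos_part_complement_le[of x a] assms by (simp add: l_def u_def)
  moreover have "l + (x - l - u) \<le> 1 - a" "u + (x - l - u) \<le> a"
    using diff_pos_part_le[of x] by (simp_all add: l_def u_def)
  moreover have "(x - l - u) * r \<le> x - l - u" "(x - l - u) * (1 - r) \<le> x - l - u"
    using calculation(1) assms(5,6) by (simp_all add: mult_left_le)
  ultimately show "0 \<le> l + (x - l - u) * r" "l + (x - l - u) * r \<le> 1 - a"
    and "0 \<le> u + (x - l - u) * (1 - r)" "u + (x - l - u) * (1 - r) \<le> a"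
    using assms(5,6) by (simp_all add: l_def u_def pos_part_nonneg)
qed

text \<open>Each entry above \<open>a\<close> contributes at most \<open>1 - a\<close>; if there are more than \<open>K\<close> of them,
  the total mass \<open>K + a\<close> leaves at most \<open>K + a - (K + 1) a\<close> for their excesses.\<close>
lemma sum_pos_part_diff_le:
  fixes A :: "'a set" and mu :: "'a \<Rightarrow> real" and K :: nat and a :: real
  assumes "finite A" and mu_bounds: "\<And>n. n \<in> A \<Longrightarrow> 0 \<le> mu n \<and> mu n \<le> 1"
    and "0 \<le> a" "a \<le> 1" and sum_le: "sum mu A \<le> real K + a"
  shows "(\<Sum>n\<in>A. pos_part (mu n - a)) \<le> real K * (1 - a)"
proof -
  define S where "S = {n\<in>A. mu n > a}"
  have "finite S" "S \<subseteq> A" using \<open>finite A\<close> by (auto simp: S_def)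
  have "(\<Sum>n\<in>A. pos_part (mu n - a)) = (\<Sum>n\<in>S. pos_part (mu n - a))"
    by (rule sum.mono_neutral_right[OF \<open>finite A\<close> \<open>S \<subseteq> A\<close>]) (auto simp: S_def pos_part_def)
  also have "\<dots> = (\<Sum>n\<in>S. mu n - a)"
    by (rule sum.cong) (auto simp: S_def pos_part_def)
  finally have excess: "(\<Sum>n\<in>A. pos_part (mu n - a)) = (\<Sum>n\<in>S. mu n - a)" .
  show ?thesis
  proof (cases "card S \<le> K")
    case True
    have "(\<Sum>n\<in>S. mu n - a) \<le> (\<Sum>n\<in>S. 1 - a)"
      by (rule sum_mono) (use mu_bounds \<open>S \<subseteq> A\<close> in auto)
    also have "\<dots> \<le> real K * (1 - a)"
      using True \<open>a \<le> 1\<close> by (simp add: mult_right_mono)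
    finally show ?thesis using excess by simp
  next
    case False
    have "sum mu S \<le> sum mu A"
      by (rule sum_mono2[OF \<open>finite A\<close> \<open>S \<subseteq> A\<close>]) (use mu_bounds in auto)
    moreover have "real (K + 1) * a \<le> real (card S) * a"
      using False \<open>0 \<le> a\<close> by (intro mult_right_mono) auto
    ultimately have "(\<Sum>n\<in>S. mu n - a) \<le> real K * (1 - a)"
      using sum_le by (simp add: sum_subtractf algebra_simps)
    then show ?thesis using excess by simp
  qed
qed

lemma interpolation_weight:
  fixes l u mu :: "'a \<Rightarrow> real"
  assumes "finite A" "sum l A \<le> s" "s \<le> sum mu A - sum u A"
  defines "r \<equiv> (s - sum l A) / (sum mu A - sum l A - sum u A)"
  shows "0 \<le> r" "r \<le> 1" "(\<Sum>n\<in>A. l n + (mu n - l n - u n) * r) = s"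
proof -
  define D where "D = sum mu A - sum l A - sum u A"
  have r: "r = (s - sum l A) / D" by (simp add: r_def D_def)
  have "0 \<le> s - sum l A" "s - sum l A \<le> D" using assms(2,3) by (simp_all add: D_def)
  moreover from this have "0 \<le> D" by linarith
  ultimately show "0 \<le> r" "r \<le> 1" by (auto simp: r divide_le_eq_1)
  have "D * r = s - sum l A"
    using \<open>0 \<le> s - sum l A\<close> \<open>s - sum l A \<le> D\<close> by (cases "D = 0") (simp_all add: r)
  then show "(\<Sum>n\<in>A. l n + (mu n - l n - u n) * r) = s"
    by (simp add: sum.distrib sum_distrib_right[symmetric] sum_subtractf D_def)
qed

lemma ceiling_eq_floor_plus_one: "x \<notin> \<int> \<Longrightarrow> \<lceil>x\<rceil> = \<lfloor>x\<rfloor> + 1"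
  by (metis Ints_of_int ceiling_altdef)

theorem mainTheorem8:
  fixes N :: nat and mu :: "nat \<Rightarrow> real" and t :: real
    and m1 m2 muF muC :: "nat \<Rightarrow> real" and r :: real
  assumes N_pos: "N \<ge> 1"
    and mu_bounds: "\<And>n. n \<in> {1..N} \<Longrightarrow> 0 \<le> mu n \<and> mu n \<le> 1"
    and t_def: "t = (\<Sum>n=1..N. mu n)"
    and t_ge: "t \<ge> 1"
    and t_nonint: "t \<notin> \<int>"
    and m1_def: "\<And>n. m1 n = pos_part (mu n - (t - of_int \<lfloor>t\<rfloor>))"
    and m2_def: "\<And>n. m2 n = pos_part (mu n - (of_int \<lceil>t\<rceil> - t))"
    and r_def: "r = (of_int \<lfloor>t\<rfloor> * (of_int \<lceil>t\<rceil> - t) - (\<Sum>n=1..N. m1 n))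
                    / (t - (\<Sum>n=1..N. m1 n) - (\<Sum>n=1..N. m2 n))"
    and muF_def: "\<And>n. muF n = m1 n + (mu n - m1 n - m2 n) * r"
    and muC_def: "\<And>n. muC n = m2 n + (mu n - m1 n - m2 n) * (1 - r)"
  shows "(\<forall>n\<in>{1..N}. 0 \<le> muF n \<and> 0 \<le> muC n)
    \<and> (\<forall>n\<in>{1..N}. muF n + muC n = mu n)
    \<and> (\<Sum>n=1..N. muF n) = of_int \<lfloor>t\<rfloor> * (of_int \<lceil>t\<rceil> - t)
    \<and> (\<Sum>n=1..N. muC n) = of_int \<lceil>t\<rceil> * (t - of_int \<lfloor>t\<rfloor>)
    \<and> (\<forall>n\<in>{1..N}. muF n \<le> of_int \<lceil>t\<rceil> - t \<and> muC n \<le> t - of_int \<lfloor>t\<rfloor>)"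
proof -
  define f where "f = frac t"
  have f: "0 < f" "f < 1" using t_nonint frac_lt_1 by (simp_all add: f_def)
  have floor_gap: "t - of_int \<lfloor>t\<rfloor> = f" by (simp add: f_def frac_def)
  have ceiling_gap: "of_int \<lceil>t\<rceil> - t = 1 - f"
    using floor_gap ceiling_eq_floor_plus_one[OF t_nonint] by simp
  define K where "K = nat \<lfloor>t\<rfloor>"
  have K: "real_of_int \<lfloor>t\<rfloor> = real K" using t_ge by (simp add: K_def)
  have sum_m1: "(\<Sum>n=1..N. m1 n) \<le> real K * (1 - f)"
    unfolding m1_def floor_gap
    by (rule sum_pos_part_diff_le) (use mu_bounds f floor_gap K t_def in auto)
  have sum_m2: "(\<Sum>n=1..N. m2 n) \<le> real (K + 1) * (1 - (1 - f))"
    unfolding m2_def ceiling_gap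
    by (rule sum_pos_part_diff_le) (use mu_bounds f floor_gap K t_def in auto)
  have "r = (real K * (1 - f) - (\<Sum>n=1..N. m1 n))
      / ((\<Sum>n=1..N. mu n) - (\<Sum>n=1..N. m1 n) - (\<Sum>n=1..N. m2 n))"
    using r_def K ceiling_gap t_def by simp
  moreover have "real K * (1 - f) \<le> (\<Sum>n=1..N. mu n) - (\<Sum>n=1..N. m2 n)"
    using sum_m2 floor_gap K t_def by (simp add: algebra_simps)
  ultimately have r: "0 \<le> r" "r \<le> 1" and sum_muF: "(\<Sum>n=1..N. muF n) = real K * (1 - f)"
    using interpolation_weight[of "{1..N}" m1 "real K * (1 - f)" mu m2] sum_m1
    by (simp_all add: muF_def)
  have split: "\<forall>n\<in>{1..N}. muF n + muC n = mu n"
    by (simp add: muF_def muC_def algebra_simps)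
  then have "(\<Sum>n=1..N. muF n) + (\<Sum>n=1..N. muC n) = t"
    by (simp add: sum.distrib[symmetric] t_def)
  then have sum_muC: "(\<Sum>n=1..N. muC n) = real (K + 1) * f"
    using sum_muF floor_gap K by (simp add: algebra_simps)
  have entries: "0 \<le> muF n \<and> 0 \<le> muC n \<and> muF n \<le> 1 - f \<and> muC n \<le> f" if "n \<in> {1..N}" for n
    using split_pos_parts_bounds[of "mu n" f r] mu_bounds[OF that] f r
    by (simp add: muF_def muC_def m1_def m2_def floor_gap ceiling_gap)
  show ?thesis
    using entries split sum_muF sum_muC floor_gap ceiling_gap K
    by (simp add: ceiling_eq_floor_plus_one[OF t_nonint] algebra_simps)
qed

end
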